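(* Let $m$ be a positive integer and suppose there exists an $m\times m$ panstochastic matrix that is not a convex combination of panmagic permutation matrices. Let $n$ be a positive integer with $\gcd(n,6)=1$. Then there exists an $(mn)\times(mn)$ panstochastic matrix that is not a convex combination of panmagic permutation matrices.
   Context: Rows and columns of $n\times n$ matrices are indexed by $\Omega_n=\{0,\dots,n-1\}$. The $k$th upward (resp. downward) diagonal consists of positions $(i,j)$ with $i+j\equiv k$ (resp. $i-j\equiv k$) $\pmod n$. A real $n\times n$ matrix is panstochastic if its entries are nonnegative and its entries along every row, column, upward diagonal and downward diagonal sum to $1$. A panmagic permutation matrix is a permutation matrix $P_\pi$ ($(i,j)$ entry $1$ if $i=\pi(j)$, else $0$) that is panstochastic. A convex combination is a linear combination with nonnegative coefficients summing to $1$. *)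

theory Defs
  imports "HOL-Analysis.Analysis" "HOL-Combinatorics.Permutations"
begin

text \<open>An n x n real matrix is modelled as a function nat => nat => real;
only the entries with indices in {..<n} are relevant.\<close>

definition panstochastic :: "nat \<Rightarrow> (nat \<Rightarrow> nat \<Rightarrow> real) \<Rightarrow> bool" where
  "panstochastic n A \<longleftrightarrow>
     (\<forall>i<n. \<forall>j<n. A i j \<ge> 0) \<and>
     (\<forall>i<n. (\<Sum>j<n. A i j) = 1) \<and>
     (\<forall>j<n. (\<Sum>i<n. A i j) = 1) \<and>
     (\<forall>k<n. (\<Sum>p\<in>{(i,j). i < n \<and> j < n \<and> (i + j) mod n = k}. A (fst p) (snd p)) = 1) \<and>
     (\<forall>k<n. (\<Sum>p\<in>{(i,j). i < n \<and> j < n \<and> (int i - int j) mod int n = int k}. A (fst p) (snd p)) = 1)"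

definition perm_matrix :: "(nat \<Rightarrow> nat) \<Rightarrow> nat \<Rightarrow> nat \<Rightarrow> real" where
  "perm_matrix \<pi> i j = (if i = \<pi> j then 1 else 0)"

definition panmagic_perm :: "nat \<Rightarrow> (nat \<Rightarrow> nat) \<Rightarrow> bool" where
  "panmagic_perm n \<pi> \<longleftrightarrow> \<pi> permutes {..<n} \<and> panstochastic n (perm_matrix \<pi>)"

definition conv_panmagic :: "nat \<Rightarrow> (nat \<Rightarrow> nat \<Rightarrow> real) \<Rightarrow> bool" where
  "conv_panmagic n A \<longleftrightarrow>
     (\<exists>S c. finite S \<and> (\<forall>\<pi>\<in>S. panmagic_perm n \<pi>) \<and> (\<forall>\<pi>\<in>S. c \<pi> \<ge> 0) \<and>
            (\<Sum>\<pi>\<in>S. c \<pi>) = 1 \<and>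
            (\<forall>i<n. \<forall>j<n. A i j = (\<Sum>\<pi>\<in>S. c \<pi> * perm_matrix \<pi> i j)))"

end

theory Submission
  imports Defs "HOL-Number_Theory.Cong"
begin

text \<open>Let \<open>Q\<close> be the permutation matrix of \<open>y \<mapsto> 2y mod n\<close>. Since \<open>gcd n 6 = 1\<close>, the
  maps \<open>y \<mapsto> 2y\<close>, \<open>2y + y = 3y\<close> and \<open>2y - y = y\<close> are bijective modulo \<open>n\<close>, so \<open>Q\<close> is
  panmagic and the Kronecker product \<open>B = A \<otimes> Q\<close> is panstochastic. As \<open>Q\<close> fixes \<open>0\<close>,
  column \<open>n b\<close> of \<open>B\<close> vanishes outside the rows divisible by \<open>n\<close>. Hence every panmagic
  permutation \<open>\<pi>\<close> occurring with positive weight in a convex decomposition of \<open>B\<close> maps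
  multiples of \<open>n\<close> to multiples of \<open>n\<close>, and \<open>b \<mapsto> \<pi>(n b) / n\<close> is a panmagic permutation
  of the block indices. Reading the decomposition off at the entries \<open>(n a, n b)\<close>, where
  \<open>B\<close> agrees with \<open>A\<close>, decomposes \<open>A\<close>.\<close>

lemma sum_over_graph:
  assumes "\<And>j. j < N \<Longrightarrow> r j < N"
    and "\<And>i j. i < N \<Longrightarrow> j < N \<Longrightarrow> P i j \<longleftrightarrow> i = r j"
  shows "(\<Sum>p\<in>{(i,j). i < N \<and> j < N \<and> P i j}. f (fst p) (snd p)) = (\<Sum>j<N. f (r j) j)"
proof -
  have "{(i,j). i < N \<and> j < N \<and> P i j} = (\<lambda>j. (r j, j)) ` {..<N}"
    using assms by auto
  moreover have "inj_on (\<lambda>j. (r j, j)) {..<N}"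
    by (rule inj_onI) simp
  ultimately show ?thesis
    by (simp add: sum.reindex)
qed

lemma eq_diff_mod_iff:
  fixes p k j N :: int
  assumes "0 \<le> p" "p < N"
  shows "p = (k - j) mod N \<longleftrightarrow> (p + j) mod N = k mod N"
proof -
  have "p = (k - j) mod N \<longleftrightarrow> p mod N = (k - j) mod N"
    using assms by simp
  then show ?thesis
    by (simp add: mod_eq_dvd_iff algebra_simps)
qed

lemma eq_add_mod_iff:
  fixes p k j N :: int
  assumes "0 \<le> p" "p < N"
  shows "p = (j + k) mod N \<longleftrightarrow> (p - j) mod N = k mod N"
proof -
  have "p = (j + k) mod N \<longleftrightarrow> p mod N = (j + k) mod N"
    using assms by simp
  then show ?thesis
    by (simp add: mod_eq_dvd_iff algebra_simps)
qed

lemma all_mod_iff_all_less: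
  assumes "N > 0"
  shows "(\<forall>k::int. P (k mod int N)) \<longleftrightarrow> (\<forall>k<N. P (int k))"
proof
  assume "\<forall>k. P (k mod int N)"
  then show "\<forall>k<N. P (int k)"
    by (metis of_nat_mod mod_less)
next
  assume all_less: "\<forall>k<N. P (int k)"
  show "\<forall>k. P (k mod int N)"
  proof
    fix k :: int
    have "nat (k mod int N) < N" "int (nat (k mod int N)) = k mod int N"
      using assms by (simp_all add: nat_less_iff)
    then show "P (k mod int N)"
      using all_less by metis
  qed
qed

text \<open>The index \<open>k\<close>
  ranges over all integers, which keeps the index shifts in the Kronecker product free of
  case distinctions.\<close>

definition updiag_sum :: "nat \<Rightarrow> (nat \<Rightarrow> nat \<Rightarrow> real) \<Rightarrow> int \<Rightarrow> real" where
  "updiag_sum N A k = (\<Sum>j<N. A (nat ((k - int j) mod int N)) j)"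

definition downdiag_sum :: "nat \<Rightarrow> (nat \<Rightarrow> nat \<Rightarrow> real) \<Rightarrow> int \<Rightarrow> real" where
  "downdiag_sum N A k = (\<Sum>j<N. A (nat ((int j + k) mod int N)) j)"

lemma updiag_sum_mod: "updiag_sum N A (k mod int N) = updiag_sum N A k"
  by (simp add: updiag_sum_def mod_diff_left_eq)

lemma downdiag_sum_mod: "downdiag_sum N A (k mod int N) = downdiag_sum N A k"
  by (simp add: downdiag_sum_def mod_add_right_eq)

lemma updiag_sum_eq_sum_over_diagonal:
  assumes "k < N"
  shows "(\<Sum>p\<in>{(i,j). i < N \<and> j < N \<and> (i + j) mod N = k}. A (fst p) (snd p))
       = updiag_sum N A (int k)"
  unfolding updiag_sum_def
proof (rule sum_over_graph)
  show "nat ((int k - int j) mod int N) < N" if "j < N" for j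
    using that by (simp add: nat_less_iff)
  show "(i + j) mod N = k \<longleftrightarrow> i = nat ((int k - int j) mod int N)" if "i < N" "j < N" for i j
  proof -
    have "i = nat ((int k - int j) mod int N) \<longleftrightarrow> int i = (int k - int j) mod int N"
      using that by auto
    also have "\<dots> \<longleftrightarrow> (int i + int j) mod int N = int k mod int N"
      using that by (intro eq_diff_mod_iff) auto
    also have "\<dots> \<longleftrightarrow> (i + j) mod N = k"
      using assms by (metis of_nat_add of_nat_eq_iff of_nat_mod mod_less)
    finally show ?thesis by simp
  qed
qed

lemma downdiag_sum_eq_sum_over_diagonal:
  assumes "k < N"
  shows "(\<Sum>p\<in>{(i,j). i < N \<and> j < N \<and> (int i - int j) mod int N = int k}. A (fst p) (snd p))
       = downdiag_sum N A (int k)"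
  unfolding downdiag_sum_def
proof (rule sum_over_graph)
  show "nat ((int j + int k) mod int N) < N" if "j < N" for j
    using that by (simp add: nat_less_iff)
  show "(int i - int j) mod int N = int k \<longleftrightarrow> i = nat ((int j + int k) mod int N)"
    if "i < N" "j < N" for i j
  proof -
    have "i = nat ((int j + int k) mod int N) \<longleftrightarrow> int i = (int j + int k) mod int N"
      using that by auto
    also have "\<dots> \<longleftrightarrow> (int i - int j) mod int N = int k mod int N"
      using that by (intro eq_add_mod_iff) auto
    finally show ?thesis
      using assms by simp
  qed
qed

lemma panstochastic_iff_diag_sums:
  assumes "N > 0"
  shows "panstochastic N A \<longleftrightarrow>
     (\<forall>i<N. \<forall>j<N. A i j \<ge> 0) \<and>
     (\<forall>i<N. (\<Sum>j<N. A i j) = 1) \<and>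
     (\<forall>j<N. (\<Sum>i<N. A i j) = 1) \<and>
     (\<forall>k. updiag_sum N A k = 1) \<and>
     (\<forall>k. downdiag_sum N A k = 1)"
proof -
  have "(\<forall>k. updiag_sum N A k = 1) \<longleftrightarrow> (\<forall>k<N. updiag_sum N A (int k) = 1)"
    using all_mod_iff_all_less[OF assms, of "\<lambda>k. updiag_sum N A k = 1"]
    by (simp add: updiag_sum_mod)
  moreover have "(\<forall>k. downdiag_sum N A k = 1) \<longleftrightarrow> (\<forall>k<N. downdiag_sum N A (int k) = 1)"
    using all_mod_iff_all_less[OF assms, of "\<lambda>k. downdiag_sum N A k = 1"]
    by (simp add: downdiag_sum_mod)
  ultimately show ?thesis
    unfolding panstochastic_def
    by (simp add: updiag_sum_eq_sum_over_diagonal downdiag_sum_eq_sum_over_diagonal)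
qed

lemma inj_on_iff_card_fibres:
  assumes "finite A" "finite T" "card T = card A" "f ` A \<subseteq> T"
  shows "inj_on f A \<longleftrightarrow> (\<forall>t\<in>T. card {x\<in>A. f x = t} = 1)"
proof
  assume inj: "inj_on f A"
  have "f ` A = T"
    using card_subset_eq[OF assms(2,4)] card_image[OF inj] assms(3) by simp
  show "\<forall>t\<in>T. card {x\<in>A. f x = t} = 1"
  proof
    fix t assume "t \<in> T"
    then obtain x where "x \<in> A" "f x = t"
      using \<open>f ` A = T\<close> by blast
    then have "{x\<in>A. f x = t} = {x}"
      using inj by (auto dest: inj_onD)
    then show "card {x\<in>A. f x = t} = 1" by simp
  qed
next
  assume fibres: "\<forall>t\<in>T. card {x\<in>A. f x = t} = 1"
  show "inj_on f A"
  proof (rule inj_onI, rule ccontr)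
    fix x y assume xy: "x \<in> A" "y \<in> A" "f x = f y" "x \<noteq> y"
    have "{x, y} \<subseteq> {z\<in>A. f z = f x}"
      using xy by auto
    then have "card {x, y} \<le> card {z\<in>A. f z = f x}"
      using assms(1) by (intro card_mono) auto
    then show False
      using fibres xy assms(4) by auto
  qed
qed

lemma updiag_sum_perm_matrix:
  assumes "\<And>j. j < N \<Longrightarrow> \<pi> j < N"
  shows "updiag_sum N (perm_matrix \<pi>) k
       = card {j\<in>{..<N}. (int (\<pi> j) + int j) mod int N = k mod int N}"
proof -
  have "nat ((k - int j) mod int N) = \<pi> j \<longleftrightarrow> (int (\<pi> j) + int j) mod int N = k mod int N"
    if "j < N" for j
  proof -
    have "nat ((k - int j) mod int N) = \<pi> j \<longleftrightarrow> int (\<pi> j) = (k - int j) mod int N"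
      using that by (auto simp: nat_eq_iff)
    also have "\<dots> \<longleftrightarrow> (int (\<pi> j) + int j) mod int N = k mod int N"
      using assms[OF that] by (intro eq_diff_mod_iff) auto
    finally show ?thesis .
  qed
  then show ?thesis
    by (simp add: updiag_sum_def perm_matrix_def sum.If_cases Int_def eq_commute cong: conj_cong)
qed

lemma downdiag_sum_perm_matrix:
  assumes "\<And>j. j < N \<Longrightarrow> \<pi> j < N"
  shows "downdiag_sum N (perm_matrix \<pi>) k
       = card {j\<in>{..<N}. (int (\<pi> j) - int j) mod int N = k mod int N}"
proof -
  have "nat ((int j + k) mod int N) = \<pi> j \<longleftrightarrow> (int (\<pi> j) - int j) mod int N = k mod int N"
    if "j < N" for j
  proof -
    have "nat ((int j + k) mod int N) = \<pi> j \<longleftrightarrow> int (\<pi> j) = (int j + k) mod int N"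
      using that by (auto simp: nat_eq_iff)
    also have "\<dots> \<longleftrightarrow> (int (\<pi> j) - int j) mod int N = k mod int N"
      using assms[OF that] by (intro eq_add_mod_iff) auto
    finally show ?thesis .
  qed
  then show ?thesis
    by (simp add: downdiag_sum_def perm_matrix_def sum.If_cases Int_def eq_commute cong: conj_cong)
qed

lemma all_card_residue_fibres_iff_inj:
  assumes "N > 0" "\<And>j. j < N \<Longrightarrow> 0 \<le> f j \<and> f j < int N"
  shows "(\<forall>k. card {j\<in>{..<N}. f j = k mod int N} = 1) \<longleftrightarrow> inj_on f {..<N}"
proof -
  have "f ` {..<N} \<subseteq> int ` {..<N}"
    using assms(2) by (force simp: image_iff intro: bexI[of _ "nat (f _)"])
  then have "inj_on f {..<N} \<longleftrightarrow> (\<forall>t\<in>int ` {..<N}. card {j\<in>{..<N}. f j = t} = 1)"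
    by (intro inj_on_iff_card_fibres) (auto simp: card_image)
  then show ?thesis
    using all_mod_iff_all_less[OF assms(1), of "\<lambda>t. card {j\<in>{..<N}. f j = t} = 1"]
    by auto
qed

lemma panmagic_perm_iff_inj:
  assumes "N > 0" and \<pi>: "\<pi> permutes {..<N}"
  shows "panmagic_perm N \<pi> \<longleftrightarrow>
    inj_on (\<lambda>j. (int (\<pi> j) + int j) mod int N) {..<N} \<and>
    inj_on (\<lambda>j. (int (\<pi> j) - int j) mod int N) {..<N}"
proof -
  have less: "\<pi> j < N" if "j < N" for j
    using permutes_in_image[OF \<pi>] that by simp
  have rows: "(\<Sum>j<N. perm_matrix \<pi> i j) = 1" if "i < N" for i
  proof -
    have "(\<Sum>j<N. perm_matrix \<pi> i j) = (\<Sum>j<N. if i = j then 1 else 0)"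
      using sum.permute[OF \<pi>, of "\<lambda>j. if i = j then 1 else 0 :: real"]
      by (simp add: perm_matrix_def comp_def)
    then show ?thesis
      using that by simp
  qed
  have cols: "(\<Sum>i<N. perm_matrix \<pi> i j) = 1" if "j < N" for j
    using less[OF that] by (simp add: perm_matrix_def)
  have up: "(\<forall>k. updiag_sum N (perm_matrix \<pi>) k = 1)
      \<longleftrightarrow> inj_on (\<lambda>j. (int (\<pi> j) + int j) mod int N) {..<N}"
    using all_card_residue_fibres_iff_inj[OF assms(1)] assms(1)
    by (simp add: updiag_sum_perm_matrix[OF less])
  have down: "(\<forall>k. downdiag_sum N (perm_matrix \<pi>) k = 1)
      \<longleftrightarrow> inj_on (\<lambda>j. (int (\<pi> j) - int j) mod int N) {..<N}"
    using all_card_residue_fibres_iff_inj[OF assms(1)] assms(1)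
    by (simp add: downdiag_sum_perm_matrix[OF less])
  show ?thesis
    unfolding panmagic_perm_def panstochastic_iff_diag_sums[OF assms(1)] up down
    using \<pi> rows cols by (simp add: perm_matrix_def)
qed

definition kron :: "nat \<Rightarrow> (nat \<Rightarrow> nat \<Rightarrow> real) \<Rightarrow> (nat \<Rightarrow> nat \<Rightarrow> real) \<Rightarrow> nat \<Rightarrow> nat \<Rightarrow> real" where
  "kron n A Q i j = A (i div n) (j div n) * Q (i mod n) (j mod n)"

lemma nat_mod_mult_div_mod:
  fixes x :: int
  assumes "m > 0" "n > 0"
  shows "nat (x mod int (m*n)) div n = nat ((x div int n) mod int m)"
    and "nat (x mod int (m*n)) mod n = nat (x mod int n)"
proof -
  have "x mod int (m*n) = x mod (int n * int m)"
    by (simp add: mult.commute)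
  also have "\<dots> = int n * ((x div int n) mod int m) + x mod int n"
    by (rule zmod_zmult2_eq) simp
  finally have "x mod int (m*n) = int n * ((x div int n) mod int m) + x mod int n" .
  then have "nat (x mod int (m*n)) = nat (x mod int n) + nat ((x div int n) mod int m) * n"
    using assms by (simp add: nat_add_distrib nat_mult_distrib mult.commute)
  moreover have "nat (x mod int n) < n"
    using assms by (simp add: nat_less_iff)
  ultimately show "nat (x mod int (m*n)) div n = nat ((x div int n) mod int m)"
    and "nat (x mod int (m*n)) mod n = nat (x mod int n)"
    by simp_all
qed

lemma row_sum_kron:
  assumes "n > 0"
  shows "(\<Sum>j<m*n. kron n A Q i j) = (\<Sum>b<m. A (i div n) b) * (\<Sum>y<n. Q (i mod n) y)"
  using assms by (simp add: sum_mult_product kron_def sum_product)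

lemma col_sum_kron:
  assumes "n > 0"
  shows "(\<Sum>i<m*n. kron n A Q i j) = (\<Sum>a<m. A a (j div n)) * (\<Sum>x<n. Q x (j mod n))"
  using assms by (simp add: sum_mult_product kron_def sum_product)

lemma updiag_sum_kron:
  assumes "m > 0" "n > 0"
  shows "updiag_sum (m*n) (kron n A Q) k
       = (\<Sum>y<n. updiag_sum m A ((k - int y) div int n) * Q (nat ((k - int y) mod int n)) y)"
proof -
  have entry: "kron n A Q (nat ((k - int (y + b*n)) mod int (m*n))) (y + b*n)
      = A (nat (((k - int y) div int n - int b) mod int m)) b * Q (nat ((k - int y) mod int n)) y"
    if "y < n" for b y
  proof -
    have shift: "k - int (y + b*n) = (k - int y) + (- int b) * int n"
      by (simp add: algebra_simps)
    have "(k - int (y + b*n)) div int n = (k - int y) div int n - int b"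
      unfolding shift using assms(2) div_mult_self1[of "int n" "k - int y" "- int b"] by simp
    moreover have "(k - int (y + b*n)) mod int n = (k - int y) mod int n"
      unfolding shift by (rule mod_mult_self1)
    ultimately show ?thesis
      using that nat_mod_mult_div_mod[OF assms, of "k - int (y + b*n)"] by (simp add: kron_def)
  qed
  have "updiag_sum (m*n) (kron n A Q) k
      = (\<Sum>b<m. \<Sum>y<n. A (nat (((k - int y) div int n - int b) mod int m)) b
                          * Q (nat ((k - int y) mod int n)) y)"
    unfolding updiag_sum_def sum_mult_product by (intro sum.cong refl entry) simp
  also have "\<dots> = (\<Sum>y<n. updiag_sum m A ((k - int y) div int n) * Q (nat ((k - int y) mod int n)) y)"
    unfolding updiag_sum_def by (subst sum.swap) (simp add: sum_distrib_right)
  finally show ?thesis .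
qed

lemma downdiag_sum_kron:
  assumes "m > 0" "n > 0"
  shows "downdiag_sum (m*n) (kron n A Q) k
       = (\<Sum>y<n. downdiag_sum m A ((int y + k) div int n) * Q (nat ((int y + k) mod int n)) y)"
proof -
  have entry: "kron n A Q (nat ((int (y + b*n) + k) mod int (m*n))) (y + b*n)
      = A (nat ((int b + (int y + k) div int n) mod int m)) b * Q (nat ((int y + k) mod int n)) y"
    if "y < n" for b y
  proof -
    have shift: "int (y + b*n) + k = (int y + k) + int b * int n"
      by simp
    have "(int (y + b*n) + k) div int n = int b + (int y + k) div int n"
      unfolding shift using assms(2) by simp
    moreover have "(int (y + b*n) + k) mod int n = (int y + k) mod int n"
      unfolding shift by (rule mod_mult_self1)
    ultimately show ?thesis
      using that nat_mod_mult_div_mod[OF assms, of "int (y + b*n) + k"] by (simp add: kron_def)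
  qed
  have "downdiag_sum (m*n) (kron n A Q) k
      = (\<Sum>b<m. \<Sum>y<n. A (nat ((int b + (int y + k) div int n) mod int m)) b
                          * Q (nat ((int y + k) mod int n)) y)"
    unfolding downdiag_sum_def sum_mult_product by (intro sum.cong refl entry) simp
  also have "\<dots> = (\<Sum>y<n. downdiag_sum m A ((int y + k) div int n) * Q (nat ((int y + k) mod int n)) y)"
    unfolding downdiag_sum_def by (subst sum.swap) (simp add: sum_distrib_right)
  finally show ?thesis .
qed

lemma panstochastic_kron:
  assumes "m > 0" "n > 0" and A: "panstochastic m A" and Q: "panstochastic n Q"
  shows "panstochastic (m*n) (kron n A Q)"
proof -
  note A' = A[unfolded panstochastic_iff_diag_sums[OF assms(1)]]
  note Q' = Q[unfolded panstochastic_iff_diag_sums[OF assms(2)]]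
  have block: "i div n < m" "i mod n < n" if "i < m*n" for i
    using that assms(2) by (auto simp: div_less_iff_less_mult mult.commute)
  have "updiag_sum (m*n) (kron n A Q) k = updiag_sum n Q k" for k
    using A' by (simp add: updiag_sum_kron[OF assms(1,2)] updiag_sum_def[of n Q])
  moreover have "downdiag_sum (m*n) (kron n A Q) k = downdiag_sum n Q k" for k
    using A' by (simp add: downdiag_sum_kron[OF assms(1,2)] downdiag_sum_def[of n Q])
  moreover have "\<forall>i<m*n. \<forall>j<m*n. kron n A Q i j \<ge> 0"
    using A' Q' block by (simp add: kron_def)
  moreover have "\<forall>i<m*n. (\<Sum>j<m*n. kron n A Q i j) = 1"
    using A' Q' block by (simp add: row_sum_kron assms(2))
  moreover have "\<forall>j<m*n. (\<Sum>i<m*n. kron n A Q i j) = 1"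
    using A' Q' block by (simp add: col_sum_kron assms(2))
  ultimately show ?thesis
    unfolding panstochastic_iff_diag_sums[OF mult_pos_pos[OF assms(1,2)]]
    using Q' by simp
qed

lemma inj_on_mult_mod:
  fixes a :: int
  assumes "coprime a (int n)"
  shows "inj_on (\<lambda>y. (a * int y) mod int n) {..<n}"
proof (rule inj_onI)
  fix x y assume "x \<in> {..<n}" "y \<in> {..<n}" "(a * int x) mod int n = (a * int y) mod int n"
  then have "[int x = int y] (mod int n)" "int x < int n" "int y < int n"
    using cong_mult_lcancel[OF assms] by (auto simp: cong_def)
  then show "x = y"
    using cong_less_imp_eq_int[of "int x" "int n" "int y"] by simp
qed

definition mult_perm :: "nat \<Rightarrow> nat \<Rightarrow> nat \<Rightarrow> nat" where
  "mult_perm n c y = (if y < n then c * y mod n else y)"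

lemma mult_perm_permutes:
  assumes "n > 0" "coprime c n"
  shows "mult_perm n c permutes {..<n}"
proof (rule inj_imp_permutes)
  show "inj_on (mult_perm n c) {..<n}"
  proof (rule inj_onI)
    fix x y assume xy: "x \<in> {..<n}" "y \<in> {..<n}" "mult_perm n c x = mult_perm n c y"
    then have "(int c * int x) mod int n = (int c * int y) mod int n"
      by (simp add: mult_perm_def flip: of_nat_mult of_nat_mod)
    moreover have "inj_on (\<lambda>y. (int c * int y) mod int n) {..<n}"
      using assms(2) by (intro inj_on_mult_mod) simp
    ultimately show "x = y"
      using xy(1,2) by (auto dest: inj_onD)
  qed
qed (use assms(1) in \<open>auto simp: mult_perm_def\<close>)

lemma panmagic_mult_perm:
  assumes "n > 0" "coprime (int c - 1) (int n)" "coprime c n" "coprime (c + 1) n"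
  shows "panmagic_perm n (mult_perm n c)"
proof -
  have "coprime (int c + 1) (int n)"
    using assms(4) coprime_int_iff[of "c + 1" n] by (simp add: add.commute)
  have up: "(int (mult_perm n c y) + int y) mod int n = ((int c + 1) * int y) mod int n"
    if "y < n" for y
  proof -
    have "(int (mult_perm n c y) + int y) mod int n = ((int c * int y) mod int n + int y) mod int n"
      using that by (simp add: mult_perm_def of_nat_mod)
    also have "\<dots> = (int c * int y + int y) mod int n"
      by (rule mod_add_left_eq)
    also have "\<dots> = ((int c + 1) * int y) mod int n"
      by (simp only: distrib_right mult_1)
    finally show ?thesis .
  qed
  have down: "(int (mult_perm n c y) - int y) mod int n = ((int c - 1) * int y) mod int n"
    if "y < n" for y
  proof -
    have "(int (mult_perm n c y) - int y) mod int n = ((int c * int y) mod int n - int y) mod int n"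
      using that by (simp add: mult_perm_def of_nat_mod)
    also have "\<dots> = (int c * int y - int y) mod int n"
      by (rule mod_diff_left_eq)
    also have "\<dots> = ((int c - 1) * int y) mod int n"
      by (simp only: left_diff_distrib mult_1)
    finally show ?thesis .
  qed
  have "inj_on (\<lambda>j. (int (mult_perm n c j) + int j) mod int n) {..<n}
      \<longleftrightarrow> inj_on (\<lambda>y. ((int c + 1) * int y) mod int n) {..<n}"
    by (rule inj_on_cong) (simp add: up)
  moreover have "inj_on (\<lambda>j. (int (mult_perm n c j) - int j) mod int n) {..<n}
      \<longleftrightarrow> inj_on (\<lambda>y. ((int c - 1) * int y) mod int n) {..<n}"
    by (rule inj_on_cong) (simp add: down)
  ultimately show ?thesis
    unfolding panmagic_perm_iff_inj[OF assms(1) mult_perm_permutes[OF assms(1,3)]]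
    using inj_on_mult_mod[OF assms(2)] inj_on_mult_mod[OF \<open>coprime (int c + 1) (int n)\<close>]
    by blast
qed

lemma inj_on_from_multiples:
  fixes m n :: nat
  assumes "inj_on F {..<m*n}" "n > 0" "\<And>b. b < m \<Longrightarrow> F (n*b) = h (G b)"
  shows "inj_on G {..<m}"
proof (rule inj_onI)
  fix x y assume xy: "x \<in> {..<m}" "y \<in> {..<m}" "G x = G y"
  then have "F (n*x) = F (n*y)"
    using assms(3) by simp
  moreover have "n*x \<in> {..<m*n}" "n*y \<in> {..<m*n}"
    using xy(1,2) assms(2) by (simp_all add: mult.commute[of n])
  ultimately have "n*x = n*y"
    using assms(1) by (auto dest: inj_onD)
  then show "x = y"
    using assms(2) by simp
qed

definition block_perm :: "nat \<Rightarrow> nat \<Rightarrow> (nat \<Rightarrow> nat) \<Rightarrow> nat \<Rightarrow> nat" where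
  "block_perm m n \<pi> b = (if b < m then \<pi> (n*b) div n else b)"

lemma block_perm_mult:
  assumes "b < m" "n dvd \<pi> (n*b)"
  shows "\<pi> (n*b) = n * block_perm m n \<pi> b"
  using assms by (simp add: block_perm_def)

lemma block_perm_permutes:
  assumes "n > 0" and perm: "\<pi> permutes {..<m*n}"
    and multiples: "\<And>b. b < m \<Longrightarrow> n dvd \<pi> (n*b)"
  shows "block_perm m n \<pi> permutes {..<m}"
proof (rule inj_imp_permutes)
  show "inj_on (block_perm m n \<pi>) {..<m}"
    using permutes_inj_on[OF perm] assms(1) block_perm_mult[where \<pi> = \<pi>, OF _ multiples]
    by (rule inj_on_from_multiples)
  show "block_perm m n \<pi> b \<in> {..<m}" if "b \<in> {..<m}" for b
  proof -
    have "b < m"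
      using that by simp
    then have "n * block_perm m n \<pi> b < m*n"
      using block_perm_mult[where \<pi> = \<pi>, OF \<open>b < m\<close> multiples[OF \<open>b < m\<close>]]
        permutes_in_image[OF perm, of "n*b"] assms(1)
      by simp
    then show ?thesis
      by (simp add: mult.commute)
  qed
qed (simp_all add: block_perm_def)

lemma panmagic_block_perm:
  assumes "m > 0" "n > 0" and \<pi>: "panmagic_perm (m*n) \<pi>"
    and multiples: "\<And>b. b < m \<Longrightarrow> n dvd \<pi> (n*b)"
  shows "panmagic_perm m (block_perm m n \<pi>)"
proof -
  let ?\<alpha> = "block_perm m n \<pi>"
  have perm: "\<pi> permutes {..<m*n}"
    using \<pi> by (simp add: panmagic_perm_def)
  have mult: "\<pi> (n*b) = n * ?\<alpha> b" if "b < m" for b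
    using that multiples[OF that] by (rule block_perm_mult)
  have inj_sums: "inj_on (\<lambda>j. (int (\<pi> j) + int j) mod int (m*n)) {..<m*n}"
    and inj_diffs: "inj_on (\<lambda>j. (int (\<pi> j) - int j) mod int (m*n)) {..<m*n}"
    using \<pi> panmagic_perm_iff_inj[OF _ perm] assms(1,2) by simp_all
  have "inj_on (\<lambda>b. (int (?\<alpha> b) + int b) mod int m) {..<m}"
    using inj_sums assms(2)
  proof (rule inj_on_from_multiples[where h = "\<lambda>u. int n * u"])
    show "(int (\<pi> (n*b)) + int (n*b)) mod int (m*n) = int n * ((int (?\<alpha> b) + int b) mod int m)"
      if "b < m" for b
      using mult[OF that] mod_mult_mult1[of "int n" "int (?\<alpha> b) + int b" "int m"]
      by (simp add: distrib_left mult.commute[of "int m"])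
  qed
  moreover have "inj_on (\<lambda>b. (int (?\<alpha> b) - int b) mod int m) {..<m}"
    using inj_diffs assms(2)
  proof (rule inj_on_from_multiples[where h = "\<lambda>u. int n * u"])
    show "(int (\<pi> (n*b)) - int (n*b)) mod int (m*n) = int n * ((int (?\<alpha> b) - int b) mod int m)"
      if "b < m" for b
      using mult[OF that] mod_mult_mult1[of "int n" "int (?\<alpha> b) - int b" "int m"]
      by (simp add: right_diff_distrib mult.commute[of "int m"])
  qed
  ultimately show ?thesis
    using panmagic_perm_iff_inj[OF assms(1) block_perm_permutes[OF assms(2) perm multiples]]
    by blast
qed

lemma perm_matrix_block_perm:
  assumes "n > 0" "b < m" "n dvd \<pi> (n*b)"
  shows "perm_matrix \<pi> (n*a) (n*b) = perm_matrix (block_perm m n \<pi>) a b"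
  using block_perm_mult[where \<pi> = \<pi>, OF assms(2,3)] assms(1,2) by (simp add: perm_matrix_def)

lemma weighted_perm_matrix_sum_pos:
  assumes "finite S" "\<forall>\<sigma>\<in>S. c \<sigma> > 0" "\<pi> \<in> S"
  shows "(\<Sum>\<sigma>\<in>S. c \<sigma> * perm_matrix \<sigma> (\<pi> j) j) > 0"
proof -
  have "c \<pi> = c \<pi> * perm_matrix \<pi> (\<pi> j) j"
    by (simp add: perm_matrix_def)
  also have "\<dots> \<le> (\<Sum>\<sigma>\<in>S. c \<sigma> * perm_matrix \<sigma> (\<pi> j) j)"
    by (rule member_le_sum) (use assms in \<open>auto simp: perm_matrix_def less_imp_le\<close>)
  finally show ?thesis
    using assms(2,3) by auto
qed

lemma conv_panmagic_positive_weights: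
  assumes "conv_panmagic N B"
  obtains S c where "finite S" "\<forall>\<pi>\<in>S. panmagic_perm N \<pi>" "\<forall>\<pi>\<in>S. c \<pi> > 0"
    "(\<Sum>\<pi>\<in>S. c \<pi>) = 1" "\<forall>i<N. \<forall>j<N. B i j = (\<Sum>\<pi>\<in>S. c \<pi> * perm_matrix \<pi> i j)"
proof -
  obtain S c where S: "finite S" "\<forall>\<pi>\<in>S. panmagic_perm N \<pi>" "\<forall>\<pi>\<in>S. c \<pi> \<ge> 0"
    "(\<Sum>\<pi>\<in>S. c \<pi>) = 1" "\<forall>i<N. \<forall>j<N. B i j = (\<Sum>\<pi>\<in>S. c \<pi> * perm_matrix \<pi> i j)"
    using assms unfolding conv_panmagic_def by blast
  let ?S = "{\<pi>\<in>S. c \<pi> \<noteq> 0}"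
  have "(\<Sum>\<pi>\<in>?S. c \<pi>) = (\<Sum>\<pi>\<in>S. c \<pi>)"
    by (rule sum.mono_neutral_left) (use S(1) in auto)
  moreover have "(\<Sum>\<pi>\<in>?S. c \<pi> * perm_matrix \<pi> i j) = (\<Sum>\<pi>\<in>S. c \<pi> * perm_matrix \<pi> i j)" for i j
    by (rule sum.mono_neutral_left) (use S(1) in auto)
  moreover have "\<forall>\<pi>\<in>?S. c \<pi> > 0"
    using S(3) by (auto simp: less_le)
  ultimately show ?thesis
    using S that[of ?S c] by auto
qed

lemma conv_panmagicI_image:
  assumes "finite S" "\<forall>\<pi>\<in>S. panmagic_perm N (f \<pi>)" "\<forall>\<pi>\<in>S. c \<pi> \<ge> 0" "(\<Sum>\<pi>\<in>S. c \<pi>) = 1"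
    and A: "\<forall>i<N. \<forall>j<N. A i j = (\<Sum>\<pi>\<in>S. c \<pi> * perm_matrix (f \<pi>) i j)"
  shows "conv_panmagic N A"
  unfolding conv_panmagic_def
proof (intro exI conjI ballI allI impI)
  define d where "d \<tau> = (\<Sum>\<pi>\<in>{\<pi>\<in>S. f \<pi> = \<tau>}. c \<pi>)" for \<tau>
  show "finite (f ` S)" "\<And>\<tau>. \<tau> \<in> f ` S \<Longrightarrow> panmagic_perm N \<tau>"
    using assms(1,2) by auto
  show "\<And>\<tau>. \<tau> \<in> f ` S \<Longrightarrow> d \<tau> \<ge> 0"
    unfolding d_def using assms(3) by (auto intro: sum_nonneg)
  show "(\<Sum>\<tau>\<in>f ` S. d \<tau>) = 1"
    unfolding d_def using sum.image_gen[OF assms(1), of c f] assms(4) by simp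
  fix i j assume "i < N" "j < N"
  then have "A i j = (\<Sum>\<pi>\<in>S. c \<pi> * perm_matrix (f \<pi>) i j)"
    using A by simp
  also have "\<dots> = (\<Sum>\<tau>\<in>f ` S. \<Sum>\<pi>\<in>{\<pi>\<in>S. f \<pi> = \<tau>}. c \<pi> * perm_matrix (f \<pi>) i j)"
    by (rule sum.image_gen[OF assms(1)])
  also have "\<dots> = (\<Sum>\<tau>\<in>f ` S. d \<tau> * perm_matrix \<tau> i j)"
    unfolding d_def sum_distrib_right by (intro sum.cong refl) auto
  finally show "A i j = (\<Sum>\<tau>\<in>f ` S. d \<tau> * perm_matrix \<tau> i j)" .
qed

lemma conv_panmagic_kron_perm_matrix:
  assumes "m > 0" "n > 0" "q 0 = 0"
    and "conv_panmagic (m*n) (kron n A (perm_matrix q))"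
  shows "conv_panmagic m A"
proof -
  let ?B = "kron n A (perm_matrix q)"
  obtain S c where S: "finite S" "\<forall>\<pi>\<in>S. panmagic_perm (m*n) \<pi>" "\<forall>\<pi>\<in>S. c \<pi> > 0"
    "(\<Sum>\<pi>\<in>S. c \<pi>) = 1" "\<forall>i<m*n. \<forall>j<m*n. ?B i j = (\<Sum>\<pi>\<in>S. c \<pi> * perm_matrix \<pi> i j)"
    using conv_panmagic_positive_weights[OF assms(4)] by blast
  have block: "n*b < m*n" if "b < m" for b
    using that assms(2) by simp
  \<comment> \<open>Column \<open>n b\<close> of \<open>?B\<close> vanishes off the rows divisible by \<open>n\<close>, since \<open>q 0 = 0\<close>.\<close>
  have multiples: "n dvd \<pi> (n*b)" if \<pi>: "\<pi> \<in> S" and b: "b < m" for \<pi> b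
  proof (rule ccontr)
    assume "\<not> n dvd \<pi> (n*b)"
    then have "?B (\<pi> (n*b)) (n*b) = 0"
      using assms(2,3) by (simp add: kron_def perm_matrix_def dvd_eq_mod_eq_0)
    moreover have "\<pi> (n*b) < m*n"
      using S(2) \<pi> permutes_in_image[of \<pi> "{..<m*n}"] block[OF b] by (auto simp: panmagic_perm_def)
    ultimately show False
      using weighted_perm_matrix_sum_pos[OF S(1,3) \<pi>, of "n*b"] S(5) block[OF b] by simp
  qed
  show ?thesis
  proof (rule conv_panmagicI_image[where f = "block_perm m n"])
    show "\<forall>\<pi>\<in>S. panmagic_perm m (block_perm m n \<pi>)"
      using S(2) assms(1,2) multiples by (blast intro: panmagic_block_perm)
    show "\<forall>\<pi>\<in>S. c \<pi> \<ge> 0"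
      using S(3) by (simp add: less_imp_le)
    show "\<forall>a<m. \<forall>b<m. A a b = (\<Sum>\<pi>\<in>S. c \<pi> * perm_matrix (block_perm m n \<pi>) a b)"
    proof (intro allI impI)
      fix a b assume "a < m" "b < m"
      have "perm_matrix \<pi> (n*a) (n*b) = perm_matrix (block_perm m n \<pi>) a b" if "\<pi> \<in> S" for \<pi>
        using perm_matrix_block_perm[where \<pi> = \<pi>, OF assms(2) \<open>b < m\<close> multiples[OF that \<open>b < m\<close>]] .
      moreover have "A a b = ?B (n*a) (n*b)"
        using assms(2,3) by (simp add: kron_def perm_matrix_def)
      ultimately show "A a b = (\<Sum>\<pi>\<in>S. c \<pi> * perm_matrix (block_perm m n \<pi>) a b)"
        using S(5) block \<open>a < m\<close> \<open>b < m\<close> by simp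
    qed
  qed (use S(1,4) in simp_all)
qed

theorem lemma4p2:
  fixes m n :: nat
  assumes "m > 0"
    and "\<exists>A. panstochastic m A \<and> \<not> conv_panmagic m A"
    and "n > 0"
    and "gcd n 6 = 1"
  shows "\<exists>B. panstochastic (m * n) B \<and> \<not> conv_panmagic (m * n) B"
proof -
  obtain A where A: "panstochastic m A" "\<not> conv_panmagic m A"
    using assms(2) by blast
  have "coprime n (2 * 3)"
    using assms(4) by (simp add: coprime_iff_gcd_eq_1)
  then have "coprime 2 n" "coprime 3 n"
    unfolding coprime_mult_right_iff by (simp_all add: coprime_commute)
  then have Q: "panmagic_perm n (mult_perm n 2)"
    using panmagic_mult_perm[OF assms(3), of 2] by simp
  have "mult_perm n 2 0 = 0"
    using assms(3) by (simp add: mult_perm_def)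
  then have "\<not> conv_panmagic (m*n) (kron n A (perm_matrix (mult_perm n 2)))"
    using conv_panmagic_kron_perm_matrix[OF assms(1,3)] A(2) by blast
  moreover have "panstochastic (m*n) (kron n A (perm_matrix (mult_perm n 2)))"
    using panstochastic_kron[OF assms(1,3) A(1)] Q by (simp add: panmagic_perm_def)
  ultimately show ?thesis
    by blast
qed

end
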